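(* For $D\ge1$ let $\mathbb V(D):=\sup\{|u(0)|^2:\ u\in H^1_{\mathrm{per}}(0,2\pi),\ \int_0^{2\pi}u\,dx=0,\ \|u\|^2=1,\ \|u'\|^2=D\}$. Then for all $D\ge1$, $$\mathbb V(D)<D^{1/2}-\frac1\pi .$$
   Context: Functions are complex-valued and $2\pi$-periodic; $\|\cdot\|$ is the $L_2(0,2\pi)$ norm. *)

theory Defs
  imports "HOL-Analysis.Analysis"
begin

text \<open>u is in H^1_per(0,2pi) with weak derivative v: u is 2pi-periodic and
  absolutely continuous on [0,2pi], u(x) = u(0) + int_0^x v, where v is in
  L^2(0,2pi) (hence in L^1). u is identified with its continuous representative.\<close>
definition H1per :: "(real \<Rightarrow> complex) \<Rightarrow> (real \<Rightarrow> complex) \<Rightarrow> bool" where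
  "H1per u v \<longleftrightarrow>
     (\<forall>x. u (x + 2*pi) = u x) \<and>
     v absolutely_integrable_on {0..2*pi} \<and>
     (\<lambda>x. (cmod (v x))^2) integrable_on {0..2*pi} \<and>
     (\<forall>x\<in>{0..2*pi}. u x = u 0 + integral {0..x} v)"

definition VV :: "real \<Rightarrow> real" where
  "VV D = Sup {(cmod (u 0))^2 | u v. H1per u v
              \<and> integral {0..2*pi} u = 0
              \<and> integral {0..2*pi} (\<lambda>x. (cmod (u x))^2) = 1
              \<and> integral {0..2*pi} (\<lambda>x. (cmod (v x))^2) = D}"

end

theory Submission
  imports Defs
begin

text \<open>
  Let \<open>u\<close> have mean zero and derivative \<open>v\<close>, and let \<open>w\<close> be a smooth weight on \<open>[0, 2\<pi>]\<close>
  with \<open>w(2\<pi>) - w(0) = 1\<close>. Integrating \<open>w v\<close> by parts and using periodicity of \<open>u\<close> gives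
  \<open>u(0) = \<integral> w v + \<integral> (w' - 1/(2\<pi>)) u\<close>, so by Cauchy--Schwarz
  \<open>|u(0)| \<le> \<surd>D \<parallel>w\<parallel> + \<parallel>w' - 1/(2\<pi>)\<parallel>\<close>. For \<open>s = \<surd>D\<close> take \<open>w(x) = sinh(s(x - \<pi>)) / (2 sinh(\<pi>s))\<close>;
  then \<open>s\<^sup>2 \<parallel>w\<parallel>\<^sup>2 = a - b\<close> and \<open>\<parallel>w' - 1/(2\<pi>)\<parallel>\<^sup>2 = a + b - 1/(2\<pi>)\<close> with
  \<open>a = s coth(\<pi>s)/4\<close> and \<open>b = \<pi>s\<^sup>2/(4 sinh\<^sup>2(\<pi>s))\<close>. As \<open>coth(\<pi>s) - 1\<close> and \<open>1/sinh\<^sup>2(\<pi>s)\<close> are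
  exponentially small in \<open>s \<ge> 1\<close>, the bound \<open>(\<surd>a + \<surd>(a + b - 1/(2\<pi>)))\<^sup>2\<close> on \<open>|u(0)|\<^sup>2\<close> is
  strictly below \<open>s - 1/\<pi>\<close>, uniformly in \<open>u\<close>.
\<close>

section \<open>Integration by parts with an absolutely integrable factor\<close>

lemma eq_if_increment_bound:
  fixes \<Phi> :: "real \<Rightarrow> 'a::real_normed_vector"
  assumes "a \<le> b"
    and incr: "\<And>p q. a \<le> p \<Longrightarrow> p \<le> q \<Longrightarrow> q \<le> b \<Longrightarrow>
                 norm (\<Phi> q - \<Phi> p) \<le> K * (q - p) * (m q - m p)"
  shows "\<Phi> b = \<Phi> a"
proof -
  have bound: "norm (\<Phi> b - \<Phi> a) \<le> K * (b - a) * (m b - m a) / real n" if n: "n > 0" for n :: nat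
  proof -
    define h where "h = (b - a) / real n"
    define x where "x k = a + real k * h" for k :: nat
    have h0: "0 \<le> h" using assms(1) n by (simp add: h_def)
    have xn: "x n = b" using n by (simp add: x_def h_def)
    have "norm (\<Phi> (x k) - \<Phi> a) \<le> K * h * (m (x k) - m a)" if "k \<le> n" for k
      using that
    proof (induction k)
      case 0
      then show ?case by (simp add: x_def)
    next
      case (Suc k)
      have "a \<le> x k" "x k \<le> x (Suc k)" using h0 by (simp_all add: x_def algebra_simps)
      moreover have "x (Suc k) \<le> x n"
      proof -
        have "real (Suc k) * h \<le> real n * h"
          by (intro mult_right_mono) (use Suc.prems h0 in auto)
        then show ?thesis by (simp add: x_def)
      qed
      ultimately have step: "norm (\<Phi> (x (Suc k)) - \<Phi> (x k)) \<le> K * h * (m (x (Suc k)) - m (x k))"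
        using incr[of "x k" "x (Suc k)"] xn by (simp add: x_def algebra_simps)
      have "norm (\<Phi> (x (Suc k)) - \<Phi> a)
            \<le> norm (\<Phi> (x k) - \<Phi> a) + norm (\<Phi> (x (Suc k)) - \<Phi> (x k))"
        using norm_triangle_ineq[of "\<Phi> (x k) - \<Phi> a" "\<Phi> (x (Suc k)) - \<Phi> (x k)"] by simp
      also have "\<dots> \<le> K * h * (m (x k) - m a) + K * h * (m (x (Suc k)) - m (x k))"
        using Suc step by simp
      finally show ?case by (simp add: algebra_simps)
    qed
    from this[of n] show ?thesis by (simp add: xn h_def)
  qed
  have "(\<lambda>n. K * (b - a) * (m b - m a) / real n) \<longlonglongrightarrow> 0"
    by (rule lim_const_over_n)
  then have "norm (\<Phi> b - \<Phi> a) \<le> 0"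
    by (rule LIMSEQ_le_const) (use bound in \<open>auto intro!: exI[of _ 1]\<close>)
  then show ?thesis by simp
qed

lemma absolutely_integrable_continuous_scaleR:
  fixes v :: "real \<Rightarrow> 'a::euclidean_space"
  assumes "continuous_on {a..b} g" and "v absolutely_integrable_on {a..b}"
  shows "(\<lambda>x. g x *\<^sub>R v x) absolutely_integrable_on {a..b}"
proof (rule absolutely_integrable_bounded_measurable_product
    [OF bilinear_conv_bounded_bilinear[THEN iffD2, OF bounded_bilinear_scaleR]])
  show "g \<in> borel_measurable (lebesgue_on {a..b})"
    by (rule continuous_imp_measurable_on_sets_lebesgue[OF assms(1)]) auto
  show "bounded (g ` {a..b})"
    by (meson assms(1) compact_Icc compact_continuous_image compact_imp_bounded)
qed (use assms(2) in auto)

text \<open>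
  The indefinite integral \<open>U\<close> of \<open>v\<close> need not be differentiable off a countable set, so the
  library's integration by parts does not apply. Instead, the defect \<open>\<Phi>\<close> of the formula has
  increments of order \<open>(q - p) \<integral>\<^sub>p\<^sup>q |v|\<close>, which forces it to be constant.
\<close>

lemma integration_by_parts_increment:
  fixes v :: "real \<Rightarrow> 'a::euclidean_space"
  assumes pq: "a \<le> p" "p \<le> q" "q \<le> b"
    and v: "v absolutely_integrable_on {a..b}"
    and w: "\<And>x. x \<in> {a..b} \<Longrightarrow> (w has_real_derivative w' x) (at x within {a..b})"
    and w': "continuous_on {a..b} w'"
  defines "U \<equiv> \<lambda>x. integral {a..x} v"
  defines "\<Phi> \<equiv> \<lambda>x. w x *\<^sub>R U x - integral {a..x} (\<lambda>y. w y *\<^sub>R v y)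
                 - integral {a..x} (\<lambda>y. w' y *\<^sub>R U y)"
  shows "\<Phi> q - \<Phi> p = integral {p..q} (\<lambda>y. (w q - w y) *\<^sub>R v y)
                       - integral {p..q} (\<lambda>y. w' y *\<^sub>R (U y - U p))"
proof -
  have pq_sub: "{p..q} \<subseteq> {a..b}" using pq by auto
  have split: "integral {a..q} f = integral {a..p} f + integral {p..q} f"
    if "f integrable_on {a..b}" for f :: "real \<Rightarrow> 'a"
    using Henstock_Kurzweil_Integration.integral_combine[where a=a and c=p and b=q and f=f]
          integrable_on_subinterval[OF that] pq
    by auto
  have w_cont: "continuous_on {a..b} w"
    using w by (meson DERIV_continuous continuous_on_eq_continuous_within)
  have vi: "v integrable_on {a..b}"
    using v absolutely_integrable_on_def by blast
  have U_cont: "continuous_on {a..b} U"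
    unfolding U_def by (rule indefinite_integral_continuous_1[OF vi])
  have wv: "(\<lambda>y. g y *\<^sub>R v y) integrable_on {a..b}" if "continuous_on {a..b} g" for g
    using absolutely_integrable_continuous_scaleR[OF that v] absolutely_integrable_on_def by blast
  have w'U: "(\<lambda>y. w' y *\<^sub>R U y) integrable_on {a..b}"
    by (intro integrable_continuous_interval continuous_intros w' U_cont)
  have w'_int: "(w' has_integral (w q - w p)) {p..q}"
    by (rule fundamental_theorem_of_calculus)
       (use pq w in \<open>auto simp: has_real_derivative_iff_has_vector_derivative
                        intro: has_vector_derivative_within_subset[OF _ pq_sub]\<close>)
  have Uq: "U q = U p + integral {p..q} v"
    unfolding U_def by (rule split[OF vi])
  have first: "integral {p..q} (\<lambda>y. (w q - w y) *\<^sub>R v y)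
               = w q *\<^sub>R integral {p..q} v - integral {p..q} (\<lambda>y. w y *\<^sub>R v y)"
    using integral_diff[OF integrable_on_subinterval[OF wv, of "\<lambda>_. w q"]
                           integrable_on_subinterval[OF wv[OF w_cont]]] pq_sub
    by (simp add: scaleR_left_diff_distrib)
  have second: "integral {p..q} (\<lambda>y. w' y *\<^sub>R (U y - U p))
                = integral {p..q} (\<lambda>y. w' y *\<^sub>R U y) - (w q - w p) *\<^sub>R U p"
    using integral_diff[OF integrable_on_subinterval[OF w'U pq_sub]
                           has_integral_integrable[OF has_integral_scaleR_left[OF w'_int, of "U p"]]]
          integral_unique[OF has_integral_scaleR_left[OF w'_int, of "U p"]]
    by (simp add: scaleR_right_diff_distrib)
  show ?thesis
    unfolding \<Phi>_def first second Uq
      split[OF wv[OF w_cont]] split[OF w'U]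
    by (simp add: algebra_simps)
qed

lemma norm_indefinite_integral_diff_le:
  fixes v :: "real \<Rightarrow> 'a::euclidean_space"
  assumes v: "v absolutely_integrable_on {a..b}" and "a \<le> p" "p \<le> x" "x \<le> q" "q \<le> b"
  shows "norm (integral {a..x} v - integral {a..p} v) \<le> integral {p..q} (\<lambda>y. norm (v y))"
proof -
  have vi: "v integrable_on {a..b}" and nv: "(\<lambda>y. norm (v y)) integrable_on {a..b}"
    using v absolutely_integrable_on_def by blast+
  have "integral {a..x} v - integral {a..p} v = integral {p..x} v"
    using Henstock_Kurzweil_Integration.integral_combine[where a=a and c=p and b=x and f=v]
          integrable_on_subinterval[OF vi, of a x] assms
    by (simp add: algebra_simps)
  also have "norm \<dots> \<le> integral {p..x} (\<lambda>y. norm (v y))"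
    using assms by (intro integral_norm_bound_integral integrable_on_subinterval[OF vi]
        integrable_on_subinterval[OF nv]) auto
  also have "\<dots> \<le> integral {p..q} (\<lambda>y. norm (v y))"
    using assms by (intro integral_subset_le integrable_on_subinterval[OF nv]) auto
  finally show ?thesis .
qed

lemma integration_by_parts_increment_bound:
  fixes v :: "real \<Rightarrow> 'a::euclidean_space"
  assumes pq: "a \<le> p" "p \<le> q" "q \<le> b"
    and v: "v absolutely_integrable_on {a..b}"
    and w: "\<And>x. x \<in> {a..b} \<Longrightarrow> (w has_real_derivative w' x) (at x within {a..b})"
    and w': "continuous_on {a..b} w'"
    and L: "\<And>x. x \<in> {a..b} \<Longrightarrow> \<bar>w' x\<bar> \<le> L"
  defines "U \<equiv> \<lambda>x. integral {a..x} v"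
  defines "\<Phi> \<equiv> \<lambda>x. w x *\<^sub>R U x - integral {a..x} (\<lambda>y. w y *\<^sub>R v y)
                 - integral {a..x} (\<lambda>y. w' y *\<^sub>R U y)"
  shows "norm (\<Phi> q - \<Phi> p) \<le> 2 * L * (q - p) * integral {p..q} (\<lambda>y. norm (v y))"
proof -
  let ?V = "integral {p..q} (\<lambda>y. norm (v y))"
  have sub: "{p..q} \<subseteq> {a..b}" using pq by auto
  have v_pq: "v absolutely_integrable_on {p..q}"
    using absolutely_integrable_on_subinterval[OF v sub] .
  then have nv: "(\<lambda>y. norm (v y)) integrable_on {p..q}"
    using absolutely_integrable_on_def by blast
  have w_cont: "continuous_on {a..b} w"
    using w by (meson DERIV_continuous continuous_on_eq_continuous_within)
  have U_cont: "continuous_on {a..b} U"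
    unfolding U_def using v absolutely_integrable_on_def indefinite_integral_continuous_1 by blast
  have L0: "0 \<le> L" using L[of p] pq by auto
  have lipschitz: "\<bar>w q - w y\<bar> \<le> L * (q - p)" if y: "y \<in> {p..q}" for y
  proof -
    have "\<bar>w q - w y\<bar> \<le> L * \<bar>q - y\<bar>"
      using field_differentiable_bound[of "{a..b}" w w' L q y] w L y pq by auto
    also have "\<dots> \<le> L * (q - p)"
      using L0 y by (intro mult_left_mono) auto
    finally show ?thesis .
  qed
  have "norm (integral {p..q} (\<lambda>y. (w q - w y) *\<^sub>R v y))
        \<le> integral {p..q} (\<lambda>y. L * (q - p) * norm (v y))"
  proof (rule integral_norm_bound_integral)
    have "continuous_on {p..q} (\<lambda>y. w q - w y)"
      by (intro continuous_intros continuous_on_subset[OF w_cont sub])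
    with v_pq show "(\<lambda>y. (w q - w y) *\<^sub>R v y) integrable_on {p..q}"
      using absolutely_integrable_continuous_scaleR absolutely_integrable_on_def by blast
  qed (use integrable_on_cmult_left[OF nv] lipschitz in \<open>auto intro: mult_right_mono\<close>)
  also have "\<dots> = L * (q - p) * ?V" using nv by simp
  finally have first: "norm (integral {p..q} (\<lambda>y. (w q - w y) *\<^sub>R v y)) \<le> L * (q - p) * ?V" .
  have "norm (integral {p..q} (\<lambda>y. w' y *\<^sub>R (U y - U p))) \<le> integral {p..q} (\<lambda>y. L * ?V)"
  proof (rule integral_norm_bound_integral)
    show "(\<lambda>y. w' y *\<^sub>R (U y - U p)) integrable_on {p..q}"
      by (intro integrable_continuous_interval continuous_intros
          continuous_on_subset[OF w' sub] continuous_on_subset[OF U_cont sub])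
  qed (use L L0 sub pq norm_indefinite_integral_diff_le[OF v] in \<open>auto simp: U_def intro!: mult_mono\<close>)
  also have "\<dots> = L * (q - p) * ?V" using pq by simp
  finally have second: "norm (integral {p..q} (\<lambda>y. w' y *\<^sub>R (U y - U p))) \<le> L * (q - p) * ?V" .
  have "\<Phi> q - \<Phi> p = integral {p..q} (\<lambda>y. (w q - w y) *\<^sub>R v y)
                       - integral {p..q} (\<lambda>y. w' y *\<^sub>R (U y - U p))"
    unfolding \<Phi>_def U_def by (rule integration_by_parts_increment[OF pq v w w'])
  then have "norm (\<Phi> q - \<Phi> p) \<le> norm (integral {p..q} (\<lambda>y. (w q - w y) *\<^sub>R v y))
                                  + norm (integral {p..q} (\<lambda>y. w' y *\<^sub>R (U y - U p)))"
    by (simp only: norm_triangle_ineq4)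
  with first second show ?thesis by linarith
qed

lemma integration_by_parts_absolutely_integrable:
  fixes v :: "real \<Rightarrow> 'a::euclidean_space"
  assumes ab: "a \<le> b"
    and v: "v absolutely_integrable_on {a..b}"
    and w: "\<And>x. x \<in> {a..b} \<Longrightarrow> (w has_real_derivative w' x) (at x within {a..b})"
    and w': "continuous_on {a..b} w'"
  shows "integral {a..b} (\<lambda>y. w y *\<^sub>R v y) + integral {a..b} (\<lambda>y. w' y *\<^sub>R integral {a..y} v)
         = w b *\<^sub>R integral {a..b} v"
proof -
  obtain L where L: "\<And>x. x \<in> {a..b} \<Longrightarrow> \<bar>w' x\<bar> \<le> L"
    using compact_imp_bounded[OF compact_continuous_image[OF w' compact_Icc]]
    unfolding bounded_iff by (metis image_eqI real_norm_def)
  define m where "m x = integral {a..x} (\<lambda>y. norm (v y))" for x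
  define \<Phi> where "\<Phi> x = w x *\<^sub>R integral {a..x} v - integral {a..x} (\<lambda>y. w y *\<^sub>R v y)
                         - integral {a..x} (\<lambda>y. w' y *\<^sub>R integral {a..y} v)" for x
  have "\<Phi> b = \<Phi> a"
  proof (rule eq_if_increment_bound[OF ab])
    fix p q assume pq: "a \<le> p" "p \<le> q" "q \<le> b"
    have "m q - m p = integral {p..q} (\<lambda>y. norm (v y))"
      using Henstock_Kurzweil_Integration.integral_combine[where a=a and c=p and b=q and f="\<lambda>y. norm (v y)"]
            integrable_on_subinterval[of "\<lambda>y. norm (v y)" "{a..b}" a q] v pq
      by (simp add: m_def absolutely_integrable_on_def algebra_simps)
    then show "norm (\<Phi> q - \<Phi> p) \<le> (2 * L) * (q - p) * (m q - m p)"
      using integration_by_parts_increment_bound[OF pq v w w' L] by (simp add: \<Phi>_def)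
  qed
  then show ?thesis by (simp add: \<Phi>_def algebra_simps)
qed

section \<open>Cauchy--Schwarz inequality for the gauge integral\<close>

lemma le_sqrt_mult_if_amgm_bound:
  fixes X A B :: real
  assumes A: "0 \<le> A" and B: "0 \<le> B"
    and amgm: "\<And>l. 0 < l \<Longrightarrow> X \<le> (l * A + B / l) / 2"
  shows "X \<le> sqrt A * sqrt B"
proof (cases "0 < A \<and> 0 < B")
  case True
  have "X \<le> (sqrt B / sqrt A * A + B / (sqrt B / sqrt A)) / 2"
    using True by (intro amgm) simp
  also have "\<dots> = sqrt A * sqrt B"
    using True A B by (simp add: field_simps)
  finally show ?thesis .
next
  case False
  then have zero: "A = 0 \<or> B = 0" using A B by auto
  have "X \<le> 0"
  proof (rule ccontr)
    assume "\<not> X \<le> 0"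
    then have X: "0 < X" by simp
    show False
    proof (cases "A = 0")
      case True
      have "0 < B / X + 1" using X B by (simp add: add_nonneg_pos)
      then have "X \<le> (B / (B / X + 1)) / 2" using amgm[of "B / X + 1"] True by simp
      also have "\<dots> < X" using X B by (simp add: field_simps add_nonneg_pos)
      finally show False by simp
    next
      case False
      with zero have "B = 0" by simp
      have "X \<le> (X / (A + 1) * A) / 2" using amgm[of "X / (A + 1)"] X A \<open>B = 0\<close> by simp
      also have "\<dots> < X" using X A by (simp add: field_simps add_nonneg_pos)
      finally show False by simp
    qed
  qed
  then show ?thesis using zero by auto
qed

lemma norm_integral_scaleR_le_sqrt:
  fixes f :: "real \<Rightarrow> real" and g :: "real \<Rightarrow> 'a::euclidean_space"
  assumes fg: "(\<lambda>x. f x *\<^sub>R g x) absolutely_integrable_on S"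
    and f: "(\<lambda>x. (f x)\<^sup>2) integrable_on S"
    and g: "(\<lambda>x. (norm (g x))\<^sup>2) integrable_on S"
  shows "norm (integral S (\<lambda>x. f x *\<^sub>R g x))
         \<le> sqrt (integral S (\<lambda>x. (f x)\<^sup>2)) * sqrt (integral S (\<lambda>x. (norm (g x))\<^sup>2))"
proof (rule le_sqrt_mult_if_amgm_bound)
  show "0 \<le> integral S (\<lambda>x. (f x)\<^sup>2)" "0 \<le> integral S (\<lambda>x. (norm (g x))\<^sup>2)"
    by (simp_all add: f g integral_nonneg)
  fix l :: real assume l: "0 < l"
  have fg': "(\<lambda>x. f x *\<^sub>R g x) integrable_on S" "(\<lambda>x. norm (f x *\<^sub>R g x)) integrable_on S"
    using fg unfolding absolutely_integrable_on_def by auto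
  have lf: "(\<lambda>x. l * (f x)\<^sup>2) integrable_on S"
    using integrable_on_cmult_left[OF f, of l] by simp
  have g': "(\<lambda>x. (norm (g x))\<^sup>2 / l) integrable_on S"
    by (rule integrable_on_divide[OF g])
  have amgm: "norm (f x *\<^sub>R g x) \<le> (l * (f x)\<^sup>2 + (norm (g x))\<^sup>2 / l) / 2" for x
  proof -
    have "0 \<le> (l * \<bar>f x\<bar> - norm (g x))\<^sup>2 / l" using l by simp
    then show ?thesis using l by (simp add: field_simps power2_eq_square)
  qed
  have "norm (integral S (\<lambda>x. f x *\<^sub>R g x)) \<le> integral S (\<lambda>x. norm (f x *\<^sub>R g x))"
    by (rule integral_norm_bound_integral[OF fg']) simp
  also have "\<dots> \<le> integral S (\<lambda>x. (l * (f x)\<^sup>2 + (norm (g x))\<^sup>2 / l) / 2)"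
    by (rule integral_le[OF fg'(2)]) (use amgm f g l in \<open>auto intro!: integrable_add integrable_on_divide\<close>)
  also have "\<dots> = (l * integral S (\<lambda>x. (f x)\<^sup>2) + integral S (\<lambda>x. (norm (g x))\<^sup>2) / l) / 2"
    using integral_add[OF lf g'] by simp
  finally show "norm (integral S (\<lambda>x. f x *\<^sub>R g x))
       \<le> (l * integral S (\<lambda>x. (f x)\<^sup>2) + integral S (\<lambda>x. (norm (g x))\<^sup>2) / l) / 2" .
qed

section \<open>The value at zero of a periodic \<open>H\<^sup>1\<close> function\<close>

lemma H1per_continuous_on:
  assumes "H1per u v"
  shows "continuous_on {0..2*pi} u"
proof -
  have "v integrable_on {0..2*pi}"
    using assms unfolding H1per_def absolutely_integrable_on_def by blast
  then have "continuous_on {0..2*pi} (\<lambda>x. u 0 + integral {0..x} v)"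
    by (intro continuous_intros indefinite_integral_continuous_1)
  then show ?thesis
    by (rule continuous_on_eq) (use assms in \<open>unfold H1per_def, metis\<close>)
qed

lemma H1per_value_at_0:
  assumes H: "H1per u v" and mean: "integral {0..2*pi} u = 0"
    and w: "\<And>x. x \<in> {0..2*pi} \<Longrightarrow> (w has_real_derivative w' x) (at x within {0..2*pi})"
    and w': "continuous_on {0..2*pi} w'"
    and jump: "w (2*pi) - w 0 = 1"
  shows "u 0 = integral {0..2*pi} (\<lambda>x. w x *\<^sub>R v x)
             + integral {0..2*pi} (\<lambda>x. (w' x - 1 / (2*pi)) *\<^sub>R u x)"
proof -
  have v: "v absolutely_integrable_on {0..2*pi}"
    and rep: "\<And>x. x \<in> {0..2*pi} \<Longrightarrow> integral {0..x} v = u x - u 0"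
    using H unfolding H1per_def by (blast, metis add_diff_cancel_left')
  have "u (2*pi) = u 0"
    using H unfolding H1per_def by (metis add.left_neutral)
  then have v_mean: "integral {0..2*pi} v = 0"
    using rep[of "2*pi"] by simp
  have u: "continuous_on {0..2*pi} u" by (rule H1per_continuous_on[OF H])
  have w'_int: "(w' has_integral 1) {0..2*pi}"
    using fundamental_theorem_of_calculus[of 0 "2*pi" w w'] w jump
    by (simp add: has_real_derivative_iff_has_vector_derivative)
  have w'u: "(\<lambda>x. w' x *\<^sub>R u x) integrable_on {0..2*pi}"
    by (intro integrable_continuous_interval continuous_intros w' u)
  have u0: "(\<lambda>x. w' x *\<^sub>R u 0) integrable_on {0..2*pi}"
    using w'_int by (intro integrable_on_scaleR_left) blast
  have "integral {0..2*pi} (\<lambda>x. w' x *\<^sub>R integral {0..x} v)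
        = integral {0..2*pi} (\<lambda>x. w' x *\<^sub>R u x - w' x *\<^sub>R u 0)"
    by (rule integral_cong) (simp add: rep scaleR_right_diff_distrib)
  also have "\<dots> = integral {0..2*pi} (\<lambda>x. w' x *\<^sub>R u x) - u 0"
    by (simp only: integral_diff[OF w'u u0] integral_unique[OF has_integral_scaleR_left[OF w'_int]]
        scaleR_one)
  finally have by_parts_term: "integral {0..2*pi} (\<lambda>x. w' x *\<^sub>R integral {0..x} v)
                               = integral {0..2*pi} (\<lambda>x. w' x *\<^sub>R u x) - u 0" .
  have "integral {0..2*pi} (\<lambda>x. w x *\<^sub>R v x)
        + integral {0..2*pi} (\<lambda>x. w' x *\<^sub>R integral {0..x} v) = 0"
    using integration_by_parts_absolutely_integrable[OF _ v w w'] v_mean by simp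
  then have "u 0 = integral {0..2*pi} (\<lambda>x. w x *\<^sub>R v x) + integral {0..2*pi} (\<lambda>x. w' x *\<^sub>R u x)"
    unfolding by_parts_term by (simp add: algebra_simps)
  moreover have "integral {0..2*pi} (\<lambda>x. (w' x - 1 / (2*pi)) *\<^sub>R u x)
                 = integral {0..2*pi} (\<lambda>x. w' x *\<^sub>R u x)"
    using integral_diff[OF w'u integrable_cmul[OF integrable_continuous_interval[OF u], of "1 / (2*pi)"]]
    by (simp only: scaleR_left_diff_distrib integral_cmul mean scaleR_zero_right diff_zero)
  ultimately show ?thesis by simp
qed

lemma H1per_norm_value_at_0_le:
  assumes H: "H1per u v" and mean: "integral {0..2*pi} u = 0"
    and w: "\<And>x. x \<in> {0..2*pi} \<Longrightarrow> (w has_real_derivative w' x) (at x within {0..2*pi})"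
    and w': "continuous_on {0..2*pi} w'"
    and jump: "w (2*pi) - w 0 = 1"
  shows "cmod (u 0) \<le> sqrt (integral {0..2*pi} (\<lambda>x. (w x)\<^sup>2))
                        * sqrt (integral {0..2*pi} (\<lambda>x. (cmod (v x))\<^sup>2))
                      + sqrt (integral {0..2*pi} (\<lambda>x. (w' x - 1 / (2*pi))\<^sup>2))
                        * sqrt (integral {0..2*pi} (\<lambda>x. (cmod (u x))\<^sup>2))"
proof -
  have v: "v absolutely_integrable_on {0..2*pi}"
    and v2: "(\<lambda>x. (cmod (v x))\<^sup>2) integrable_on {0..2*pi}"
    using H unfolding H1per_def by blast+
  have u: "continuous_on {0..2*pi} u" by (rule H1per_continuous_on[OF H])
  have w_cont: "continuous_on {0..2*pi} w"
    using w by (meson DERIV_continuous continuous_on_eq_continuous_within)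
  have "cmod (integral {0..2*pi} (\<lambda>x. w x *\<^sub>R v x))
        \<le> sqrt (integral {0..2*pi} (\<lambda>x. (w x)\<^sup>2))
          * sqrt (integral {0..2*pi} (\<lambda>x. (cmod (v x))\<^sup>2))"
    by (intro norm_integral_scaleR_le_sqrt absolutely_integrable_continuous_scaleR w_cont v v2
        integrable_continuous_interval continuous_intros)
  moreover have "cmod (integral {0..2*pi} (\<lambda>x. (w' x - 1 / (2*pi)) *\<^sub>R u x))
        \<le> sqrt (integral {0..2*pi} (\<lambda>x. (w' x - 1 / (2*pi))\<^sup>2))
          * sqrt (integral {0..2*pi} (\<lambda>x. (cmod (u x))\<^sup>2))"
    by (intro norm_integral_scaleR_le_sqrt absolutely_integrable_continuous_real
        integrable_continuous_interval continuous_intros w' u)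
  moreover have "u 0 = integral {0..2*pi} (\<lambda>x. w x *\<^sub>R v x)
                     + integral {0..2*pi} (\<lambda>x. (w' x - 1 / (2*pi)) *\<^sub>R u x)"
    by (rule H1per_value_at_0[OF H mean w w' jump])
  then have "cmod (u 0) \<le> cmod (integral {0..2*pi} (\<lambda>x. w x *\<^sub>R v x))
                 + cmod (integral {0..2*pi} (\<lambda>x. (w' x - 1 / (2*pi)) *\<^sub>R u x))"
    by (simp only: norm_triangle_ineq)
  ultimately show ?thesis by linarith
qed

section \<open>The hyperbolic weight\<close>

lemma has_integral_sinh_sq:
  fixes s c r :: real
  assumes "s \<noteq> 0" "0 \<le> r"
  shows "((\<lambda>x. (sinh (s * (x - c)))\<^sup>2) has_integral (sinh (2 * s * r) / (2 * s) - r)) {c - r..c + r}"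
proof -
  define F where "F x = sinh (2 * s * (x - c)) / (4 * s) - x / 2" for x
  have "(F has_real_derivative (sinh (s * (x - c)))\<^sup>2) (at x within {c - r..c + r})" for x
  proof -
    have "(F has_real_derivative cosh (2 * s * (x - c)) * (2 * s) / (4 * s) - 1 / 2) (at x within {c - r..c + r})"
      unfolding F_def by (auto intro!: derivative_eq_intros)
    moreover have "cosh (2 * s * (x - c)) * (2 * s) / (4 * s) - 1 / 2 = (sinh (s * (x - c)))\<^sup>2"
      using cosh_double[of "s * (x - c)"] assms(1) by (simp add: cosh_square_eq mult.assoc field_simps)
    ultimately show ?thesis by simp
  qed
  then have "((\<lambda>x. (sinh (s * (x - c)))\<^sup>2) has_integral (F (c + r) - F (c - r))) {c - r..c + r}"
    using assms(2) by (intro fundamental_theorem_of_calculus) (auto simp: has_real_derivative_iff_has_vector_derivative)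
  moreover have "F (c + r) - F (c - r) = sinh (2 * s * r) / (2 * s) - r"
    using assms(1) by (simp add: F_def field_simps)
  ultimately show ?thesis by simp
qed

lemma has_integral_cosh_sq:
  fixes s c r :: real
  assumes "s \<noteq> 0" "0 \<le> r"
  shows "((\<lambda>x. (cosh (s * (x - c)))\<^sup>2) has_integral (sinh (2 * s * r) / (2 * s) + r)) {c - r..c + r}"
proof -
  define F where "F x = sinh (2 * s * (x - c)) / (4 * s) + x / 2" for x
  have "(F has_real_derivative (cosh (s * (x - c)))\<^sup>2) (at x within {c - r..c + r})" for x
  proof -
    have "(F has_real_derivative cosh (2 * s * (x - c)) * (2 * s) / (4 * s) + 1 / 2) (at x within {c - r..c + r})"
      unfolding F_def by (auto intro!: derivative_eq_intros)
    moreover have "cosh (2 * s * (x - c)) * (2 * s) / (4 * s) + 1 / 2 = (cosh (s * (x - c)))\<^sup>2"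
      using cosh_double[of "s * (x - c)"] assms(1) by (simp add: sinh_square_eq mult.assoc field_simps)
    ultimately show ?thesis by simp
  qed
  then have "((\<lambda>x. (cosh (s * (x - c)))\<^sup>2) has_integral (F (c + r) - F (c - r))) {c - r..c + r}"
    using assms(2) by (intro fundamental_theorem_of_calculus) (auto simp: has_real_derivative_iff_has_vector_derivative)
  moreover have "F (c + r) - F (c - r) = sinh (2 * s * r) / (2 * s) + r"
    using assms(1) by (simp add: F_def field_simps)
  ultimately show ?thesis by simp
qed

text \<open>
  The weight solves \<open>w'' = s\<^sup>2 w\<close>, the Euler--Lagrange equation of \<open>s\<^sup>2 \<parallel>w\<parallel>\<^sup>2 + \<parallel>w'\<parallel>\<^sup>2\<close>
  under the constraint \<open>w(2\<pi>) - w(0) = 1\<close>.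
\<close>

definition sinh_weight :: "real \<Rightarrow> real \<Rightarrow> real" where
  "sinh_weight s x = sinh (s * (x - pi)) / (2 * sinh (s * pi))"

definition sinh_weight' :: "real \<Rightarrow> real \<Rightarrow> real" where
  "sinh_weight' s x = s * cosh (s * (x - pi)) / (2 * sinh (s * pi))"

lemma has_real_derivative_sinh_weight:
  assumes "s \<noteq> 0"
  shows "(sinh_weight s has_real_derivative sinh_weight' s x) (at x within S)"
  unfolding sinh_weight_def sinh_weight'_def using assms by (auto intro!: derivative_eq_intros)

lemma continuous_on_sinh_weight':
  assumes "s \<noteq> 0"
  shows "continuous_on S (sinh_weight' s)"
  unfolding sinh_weight'_def using assms by (intro continuous_intros) simp

lemma sinh_weight_jump:
  assumes "s \<noteq> 0"
  shows "sinh_weight s (2 * pi) - sinh_weight s 0 = 1"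
  using assms by (simp add: sinh_weight_def field_simps)

lemma integral_sinh_weight_sq:
  assumes "s \<noteq> 0"
  shows "s\<^sup>2 * integral {0..2*pi} (\<lambda>x. (sinh_weight s x)\<^sup>2)
         = s * cosh (s * pi) / (4 * sinh (s * pi)) - pi * s\<^sup>2 / (4 * (sinh (s * pi))\<^sup>2)"
proof -
  have "((\<lambda>x. (sinh_weight s x)\<^sup>2) has_integral
          (sinh (2 * s * pi) / (2 * s) - pi) / (2 * sinh (s * pi))\<^sup>2) {0..2*pi}"
    using has_integral_divide[OF has_integral_sinh_sq[OF assms pi_ge_zero, of pi], of "(2 * sinh (s * pi))\<^sup>2"]
    by (simp add: sinh_weight_def power_divide)
  moreover have "sinh (2 * s * pi) = 2 * sinh (s * pi) * cosh (s * pi)"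
    using sinh_double[of "s * pi"] by (simp add: mult.assoc)
  ultimately show ?thesis
    using assms by (simp add: integral_unique field_simps power2_eq_square)
qed

lemma integral_sinh_weight'_minus_mean_sq:
  assumes "s \<noteq> 0"
  shows "integral {0..2*pi} (\<lambda>x. (sinh_weight' s x - 1 / (2 * pi))\<^sup>2)
         = s * cosh (s * pi) / (4 * sinh (s * pi)) + pi * s\<^sup>2 / (4 * (sinh (s * pi))\<^sup>2) - 1 / (2 * pi)"
proof -
  define k where "k = 1 / (2 * pi)"
  have sq: "((\<lambda>x. (sinh_weight' s x)\<^sup>2) has_integral
              s\<^sup>2 * (sinh (2 * s * pi) / (2 * s) + pi) / (2 * sinh (s * pi))\<^sup>2) {0..2*pi}"
    using has_integral_divide[OF has_integral_mult_left[OF has_integral_cosh_sq[OF assms pi_ge_zero, of pi]],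
            of "s\<^sup>2" "(2 * sinh (s * pi))\<^sup>2"]
    by (simp add: sinh_weight'_def power_divide power_mult_distrib mult.commute)
  have lin: "(sinh_weight' s has_integral 1) {0..2*pi}"
    using fundamental_theorem_of_calculus[of 0 "2 * pi" "sinh_weight s" "sinh_weight' s"]
      has_real_derivative_sinh_weight[OF assms] sinh_weight_jump[OF assms]
    by (simp add: has_real_derivative_iff_has_vector_derivative)
  have const: "((\<lambda>x. k\<^sup>2) has_integral 2 * pi * k\<^sup>2) {0..2*pi}"
    using has_integral_const_real[of "k\<^sup>2" 0 "2 * pi"] by simp
  have expanded: "((\<lambda>x. (sinh_weight' s x)\<^sup>2 - 2 * k * sinh_weight' s x + k\<^sup>2) has_integral
          s\<^sup>2 * (sinh (2 * s * pi) / (2 * s) + pi) / (2 * sinh (s * pi))\<^sup>2 - 2 * k * 1 + 2 * pi * k\<^sup>2)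
          {0..2*pi}"
    by (intro has_integral_add has_integral_diff has_integral_mult_right sq lin const)
  have "(\<lambda>x. (sinh_weight' s x - k)\<^sup>2)
        = (\<lambda>x. (sinh_weight' s x)\<^sup>2 - 2 * k * sinh_weight' s x + k\<^sup>2)"
    by (rule ext) (simp add: power2_eq_square algebra_simps)
  then have "integral {0..2*pi} (\<lambda>x. (sinh_weight' s x - k)\<^sup>2)
             = s\<^sup>2 * (sinh (2 * s * pi) / (2 * s) + pi) / (2 * sinh (s * pi))\<^sup>2 - 2 * k * 1 + 2 * pi * k\<^sup>2"
    using integral_unique[OF expanded] by (simp only:)
  moreover have "s\<^sup>2 * (sinh (2 * s * pi) / (2 * s) + pi) / (2 * sinh (s * pi))\<^sup>2
                 = s * cosh (s * pi) / (4 * sinh (s * pi)) + pi * s\<^sup>2 / (4 * (sinh (s * pi))\<^sup>2)"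
    using sinh_double[of "s * pi"] assms by (simp add: mult.assoc field_simps power2_eq_square)
  moreover have "2 * k * 1 - 2 * pi * k\<^sup>2 = 1 / (2 * pi)"
    by (simp add: k_def power2_eq_square)
  ultimately show ?thesis unfolding k_def by linarith
qed

lemma H1per_norm_value_at_0_le_sinh_bound:
  fixes s :: real
  assumes s: "0 < s" and H: "H1per u v" and mean: "integral {0..2*pi} u = 0"
    and u_norm: "integral {0..2*pi} (\<lambda>x. (cmod (u x))\<^sup>2) = 1"
    and v_norm: "integral {0..2*pi} (\<lambda>x. (cmod (v x))\<^sup>2) = s\<^sup>2"
  defines "a \<equiv> s * cosh (s * pi) / (4 * sinh (s * pi))"
    and "b \<equiv> pi * s\<^sup>2 / (4 * (sinh (s * pi))\<^sup>2)"
  shows "cmod (u 0) \<le> sqrt a + sqrt (a + b - 1 / (2 * pi))"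
proof -
  have s0: "s \<noteq> 0" using s by simp
  have "cmod (u 0) \<le> sqrt (integral {0..2*pi} (\<lambda>x. (sinh_weight s x)\<^sup>2)) * s
                     + sqrt (a + b - 1 / (2 * pi))"
    using H1per_norm_value_at_0_le[OF H mean has_real_derivative_sinh_weight[OF s0]
        continuous_on_sinh_weight'[OF s0] sinh_weight_jump[OF s0]] s
    unfolding u_norm v_norm integral_sinh_weight'_minus_mean_sq[OF s0] a_def b_def by simp
  also have "sqrt (integral {0..2*pi} (\<lambda>x. (sinh_weight s x)\<^sup>2)) * s
             = sqrt (s\<^sup>2 * integral {0..2*pi} (\<lambda>x. (sinh_weight s x)\<^sup>2))"
    using s by (simp add: real_sqrt_mult)
  also have "\<dots> = sqrt (a - b)"
    unfolding integral_sinh_weight_sq[OF s0] a_def b_def ..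
  also have "sqrt (a - b) \<le> sqrt a"
    unfolding b_def by simp
  finally show ?thesis by simp
qed

section \<open>Numerical estimates\<close>

lemma cosh_div_sinh_eq_exp:
  fixes y :: real
  assumes "y \<noteq> 0"
  shows "cosh y / sinh y = 1 + 2 / (exp (2 * y) - 1)"
proof -
  define E where "E = exp (2 * y)"
  have E: "E = exp y * exp y" "exp (- y) = exp y / E"
    by (simp_all add: E_def exp_add[symmetric] exp_minus field_simps)
  have "E \<noteq> 1" using assms by (simp add: E_def)
  then show ?thesis
    unfolding E_def[symmetric] by (simp add: sinh_def cosh_def E field_simps)
qed

lemma inverse_sinh_sq_eq_exp:
  fixes y :: real
  assumes "y \<noteq> 0"
  shows "1 / (4 * (sinh y)\<^sup>2) = 1 / (exp (2 * y) - 1) * (1 + 1 / (exp (2 * y) - 1))"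
proof -
  define E where "E = exp (2 * y)"
  have E: "E = exp y * exp y" "exp (- y) = exp y / E"
    by (simp_all add: E_def exp_add[symmetric] exp_minus field_simps)
  have "E \<noteq> 1" using assms by (simp add: E_def)
  have "4 * (sinh y)\<^sup>2 = (E - 1)\<^sup>2 / E"
    by (simp add: sinh_def E field_simps power2_eq_square)
  then show ?thesis
    using \<open>E \<noteq> 1\<close> unfolding E_def[symmetric] by (simp add: field_simps power2_eq_square)
qed

lemma sum_Taylor_exp_le_exp:
  fixes x :: real
  assumes "0 \<le> x"
  shows "(\<Sum>k<n. x ^ k / fact k) \<le> exp x"
proof -
  have S: "(\<lambda>k. x ^ k / fact k) sums exp x"
    using exp_converges[of x] by (simp add: divide_inverse mult.commute)
  show ?thesis
    using sum_le_suminf[OF sums_summable[OF S], of "{..<n}"] sums_unique[OF S] assms by simp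
qed

lemma exp_2pi_ge_400: "400 \<le> exp (2 * pi)"
proof -
  have "(400::real) \<le> (\<Sum>k<9. 6.28 ^ k / fact k)"
    by (simp add: eval_nat_numeral fact_numeral)
  also have "\<dots> \<le> exp 6.28"
    by (rule sum_Taylor_exp_le_exp) simp
  also have "\<dots> \<le> exp (2 * pi)"
    using pi_approx by simp
  finally show ?thesis .
qed

lemma cube_le_exp_2pi_mult:
  fixes s :: real
  assumes "1 \<le> s"
  shows "s ^ 3 \<le> exp (2 * pi * (s - 1))"
proof -
  define x where "x = 2 * pi * (s - 1)"
  have "3 * (s - 1) \<le> x"
    unfolding x_def using assms pi_gt3 by (intro mult_right_mono) auto
  then have "s ^ 3 \<le> (1 + x / 3) ^ 3"
    using assms by (intro power_mono) auto
  also have "\<dots> \<le> exp x"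
    using exp_ge_one_plus_x_over_n_power_n[of 3 x] \<open>3 * (s - 1) \<le> x\<close> assms by simp
  finally show ?thesis unfolding x_def .
qed

lemma exp_2pi_mult_ge:
  fixes s :: real
  assumes "1 \<le> s"
  shows "400 * s ^ 3 \<le> exp (2 * pi * s)"
proof -
  have "400 * s ^ 3 \<le> exp (2 * pi) * exp (2 * pi * (s - 1))"
    using exp_2pi_ge_400 cube_le_exp_2pi_mult[OF assms] assms by (intro mult_mono) auto
  also have "\<dots> = exp (2 * pi * s)"
    by (simp add: exp_add[symmetric] algebra_simps)
  finally show ?thesis .
qed

lemma inverse_exp_2pi_mult_sub_one_bounds:
  fixes s :: real
  assumes s: "1 \<le> s"
  defines "t \<equiv> 1 / (exp (2 * pi * s) - 1)"
  shows "0 < t" "t \<le> 1 / 399" "s ^ 3 * t \<le> (1 + t) / 400"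
proof -
  define E where "E = exp (2 * pi * s)"
  have E: "400 * s ^ 3 \<le> E" unfolding E_def by (rule exp_2pi_mult_ge[OF s])
  moreover have "1 \<le> s ^ 3" using s by simp
  ultimately have "400 \<le> E" by linarith
  then show "0 < t" "t \<le> 1 / 399" unfolding t_def E_def[symmetric] by (simp_all add: field_simps)
  have "E * t = 1 + t" unfolding t_def E_def[symmetric] using \<open>400 \<le> E\<close> by (simp add: field_simps)
  moreover have "s ^ 3 * t \<le> E / 400 * t"
    using E \<open>0 < t\<close> by (intro mult_right_mono) auto
  ultimately show "s ^ 3 * t \<le> (1 + t) / 400" by simp
qed

lemma sqrt_add_sqrt_sq_less:
  fixes a c S :: real
  assumes "0 \<le> a" "0 \<le> c" and "a + c < S" and "4 * a * c < (S - a - c)\<^sup>2"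
  shows "(sqrt a + sqrt c)\<^sup>2 < S"
proof -
  have "2 * sqrt a * sqrt c = sqrt (4 * a * c)"
    by (simp add: real_sqrt_mult)
  also have "\<dots> < S - a - c"
    using assms by (intro real_less_lsqrt) auto
  finally show ?thesis
    using assms(1,2) by (simp add: power2_eq_square algebra_simps)
qed

lemma weight_bound_sq_less_of_param:
  fixes s t :: real
  assumes s: "1 \<le> s" and t: "0 < t" "t \<le> 1/399" and st: "s ^ 3 * t \<le> (1 + t) / 400"
  shows "(sqrt (s * (1 + 2 * t) / 4) + sqrt (s * (1 + 2 * t) / 4 + pi * s\<^sup>2 * t * (1 + t) - 1 / (2 * pi)))\<^sup>2
         < s - 1 / pi"
proof -
  define a where "a = s * (1 + 2 * t) / 4"
  define b where "b = pi * s\<^sup>2 * t * (1 + t)"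
  define k where "k = 1 / (2 * pi)"
  have p1: "3.14159 \<le> pi" and p2: "pi \<le> 3.1416" using pi_approx by auto
  have "s\<^sup>2 * t \<le> s ^ 3 * t"
    using s t by (intro mult_right_mono power_increasing) auto
  with st have s2t: "s\<^sup>2 * t \<le> (1 + t) / 400" by linarith
  have b0: "0 \<le> b" unfolding b_def using t by simp
  have b1: "b \<le> 1 / 100"
  proof -
    have "b = pi * (s\<^sup>2 * t) * (1 + t)" unfolding b_def by simp
    also have "\<dots> \<le> 3.1416 * ((1 + 1/399) / 400) * (1 + 1/399)"
      using s2t p1 p2 t by (intro mult_mono) (auto simp: divide_right_mono)
    finally show ?thesis by simp
  qed
  have "1 * 1 \<le> s * (1 + 2 * t)" using s t by (intro mult_mono) auto
  then have a1: "1/4 \<le> a" unfolding a_def by simp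
  have k1: "k \<le> 0.16" and k0: "0 < k" unfolding k_def using p1 by (simp_all add: field_simps)
  define X where "X = s * (1 + 2 * t) / 2"
  define d where "d = 2 * s * t + b + k"
  text \<open>
    With \<open>a = X/2\<close>, the square of \<open>s - 1/\<pi> - a - (a + b - k) = X - d\<close> exceeds
    \<open>4 a (a + b - k)\<close> by \<open>d\<^sup>2 - X (4 b + 4 s t)\<close>, and the smallness of \<open>t\<close> gives
    \<open>X (4 b + 4 s t) < k\<^sup>2 \<le> d\<^sup>2\<close>.
  \<close>
  have R: "s - 1 / pi - a - (a + b - k) = X - d"
    unfolding X_def d_def a_def k_def by (simp add: field_simps)
  have "X * (4 * b + 4 * s * t) = (1 + 2 * t) * (2 * pi * (s ^ 3 * t) * (1 + t) + 2 * (s\<^sup>2 * t))"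
    unfolding X_def b_def by (simp add: field_simps power2_eq_square power3_eq_cube)
  also have "\<dots> \<le> (1 + 2 / 399) * (2 * 3.1416 * ((1 + 1/399) / 400) * (1 + 1/399) + 2 * ((1 + 1/399) / 400))"
    using st s2t s t p1 p2 by (intro mult_mono add_mono) (auto simp: divide_right_mono)
  also have "\<dots> < (1 / (2 * 3.1416))\<^sup>2"
    by (simp add: power2_eq_square)
  also have "\<dots> \<le> k\<^sup>2"
    unfolding k_def using p1 p2 by (intro power_mono) (auto simp: field_simps)
  also have "\<dots> \<le> d\<^sup>2"
    unfolding d_def using k0 b0 s t by (intro power_mono) auto
  finally have main: "X * (4 * b + 4 * s * t) < d\<^sup>2" .
  have "d \<le> 2 / 399 * s + 1 / 100 + 0.16"
  proof -
    have "s * t \<le> s * (1 / 399)" using t s by (intro mult_left_mono) auto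
    then show ?thesis unfolding d_def using b1 k1 by simp
  qed
  moreover have "s / 2 \<le> X" unfolding X_def using s t by (simp add: field_simps)
  ultimately have "0 < X - d" using s by simp
  show ?thesis
    unfolding a_def[symmetric] b_def[symmetric] k_def[symmetric]
  proof (rule sqrt_add_sqrt_sq_less)
    show "0 \<le> a" "0 \<le> a + b - k" using a1 b0 k1 by auto
    show "a + (a + b - k) < s - 1 / pi" using R \<open>0 < X - d\<close> by simp
    have "(s - 1 / pi - a - (a + b - k))\<^sup>2 - 4 * a * (a + b - k) = d\<^sup>2 - X * (4 * b + 4 * s * t)"
    proof -
      have aX: "a = X / 2" by (simp add: a_def X_def)
      have "(X - d)\<^sup>2 - 4 * a * (a + b - k) = d\<^sup>2 - X * (4 * b + 4 * s * t)"
        unfolding aX by (simp add: d_def algebra_simps power2_eq_square)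
      then show ?thesis by (simp only: R)
    qed
    then show "4 * a * (a + b - k) < (s - 1 / pi - a - (a + b - k))\<^sup>2" using main by simp
  qed
qed

lemma sinh_weight_bound_sq_less:
  fixes s :: real
  assumes s: "1 \<le> s"
  defines "a \<equiv> s * cosh (s * pi) / (4 * sinh (s * pi))"
    and "b \<equiv> pi * s\<^sup>2 / (4 * (sinh (s * pi))\<^sup>2)"
  shows "(sqrt a + sqrt (a + b - 1 / (2 * pi)))\<^sup>2 < s - 1 / pi"
proof -
  define t where "t = 1 / (exp (2 * pi * s) - 1)"
  have sp: "s * pi \<noteq> 0" using s by simp
  have e: "exp (2 * (s * pi)) = exp (2 * pi * s)" by (simp add: mult_ac)
  have "cosh (s * pi) / sinh (s * pi) = 1 + 2 * t"
    using cosh_div_sinh_eq_exp[OF sp] unfolding e t_def by simp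
  moreover have "a = s / 4 * (cosh (s * pi) / sinh (s * pi))" by (simp add: a_def)
  ultimately have a: "a = s * (1 + 2 * t) / 4" by simp
  have "1 / (4 * (sinh (s * pi))\<^sup>2) = t * (1 + t)"
    using inverse_sinh_sq_eq_exp[OF sp] unfolding e t_def .
  moreover have "b = pi * s\<^sup>2 * (1 / (4 * (sinh (s * pi))\<^sup>2))" by (simp add: b_def)
  ultimately have b: "b = pi * s\<^sup>2 * t * (1 + t)" by (simp add: mult.assoc)
  show ?thesis
    using weight_bound_sq_less_of_param[OF s inverse_exp_2pi_mult_sub_one_bounds[OF s, folded t_def]] unfolding a b .
qed

section \<open>Admissible functions\<close>

lemma has_integral_cos_sin_sq_nat_mult:
  fixes k :: nat
  assumes "k \<ge> 1"
  shows "((\<lambda>x. (cos (real k * x))\<^sup>2) has_integral pi) {0..2*pi}"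
    and "((\<lambda>x. (sin (real k * x))\<^sup>2) has_integral pi) {0..2*pi}"
proof -
  have k: "real k \<noteq> 0" using assms by simp
  have ftc: "(f' has_integral (f (2*pi) - f 0)) {0..2*pi}"
    if "\<And>x. (f has_real_derivative f' x) (at x within {0..2*pi})" for f f' :: "real \<Rightarrow> real"
    using that by (intro fundamental_theorem_of_calculus) (auto simp: has_real_derivative_iff_has_vector_derivative)
  have sin_end: "sin (2 * real k * (2 * pi)) = 0"
    using sin_2npi[of "2 * k"] by (simp add: mult_ac)
  have "((\<lambda>x. x / 2 + sin (2 * real k * x) / (4 * real k)) has_real_derivative (cos (real k * x))\<^sup>2)
          (at x within {0..2*pi})" for x
  proof -
    have "((\<lambda>x. x / 2 + sin (2 * real k * x) / (4 * real k)) has_real_derivative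
            1 / 2 + cos (2 * real k * x) * (2 * real k) / (4 * real k)) (at x within {0..2*pi})"
      by (auto intro!: derivative_eq_intros)
    moreover have "1 / 2 + cos (2 * real k * x) * (2 * real k) / (4 * real k) = (cos (real k * x))\<^sup>2"
      using k cos_double_cos[of "real k * x"] by (simp add: field_simps mult.assoc)
    ultimately show ?thesis by simp
  qed
  from ftc[OF this] show "((\<lambda>x. (cos (real k * x))\<^sup>2) has_integral pi) {0..2*pi}"
    using sin_end by simp
  have "((\<lambda>x. x / 2 - sin (2 * real k * x) / (4 * real k)) has_real_derivative (sin (real k * x))\<^sup>2)
          (at x within {0..2*pi})" for x
  proof -
    have "((\<lambda>x. x / 2 - sin (2 * real k * x) / (4 * real k)) has_real_derivative
            1 / 2 - cos (2 * real k * x) * (2 * real k) / (4 * real k)) (at x within {0..2*pi})"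
      by (auto intro!: derivative_eq_intros)
    moreover have "1 / 2 - cos (2 * real k * x) * (2 * real k) / (4 * real k) = (sin (real k * x))\<^sup>2"
      using k cos_double_sin[of "real k * x"] by (simp add: field_simps mult.assoc)
    ultimately show ?thesis by simp
  qed
  from ftc[OF this] show "((\<lambda>x. (sin (real k * x))\<^sup>2) has_integral pi) {0..2*pi}"
    using sin_end by simp
qed

text \<open>
  The two modes sit in the real and in the imaginary part, so \<open>|u|\<^sup>2\<close> and \<open>|v|\<^sup>2\<close> have no
  cross terms.
\<close>

lemma H1per_two_mode:
  fixes \<alpha> \<beta> :: real and n :: nat
  assumes n: "n \<ge> 1"
  defines "u \<equiv> \<lambda>x. Complex (\<alpha> * cos x) (\<beta> * cos (real n * x))"
    and "v \<equiv> \<lambda>x. Complex (- \<alpha> * sin x) (- \<beta> * real n * sin (real n * x))"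
  shows "H1per u v"
    and "integral {0..2*pi} u = 0"
    and "integral {0..2*pi} (\<lambda>x. (cmod (u x))\<^sup>2) = pi * (\<alpha>\<^sup>2 + \<beta>\<^sup>2)"
    and "integral {0..2*pi} (\<lambda>x. (cmod (v x))\<^sup>2) = pi * (\<alpha>\<^sup>2 + (real n)\<^sup>2 * \<beta>\<^sup>2)"
proof -
  have n0: "real n \<noteq> 0" using n by simp
  have cos1: "((\<lambda>x. (cos x)\<^sup>2) has_integral pi) {0..2*pi}"
    and sin1: "((\<lambda>x. (sin x)\<^sup>2) has_integral pi) {0..2*pi}"
    using has_integral_cos_sin_sq_nat_mult[of 1] by simp_all
  have u': "(u has_vector_derivative v x) (at x within S)" for x S
    unfolding u_def v_def has_vector_derivative_complex_iff
    by (auto intro!: derivative_eq_intros simp: algebra_simps)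
  have U': "((\<lambda>x. Complex (\<alpha> * sin x) (\<beta> * sin (real n * x) / real n))
              has_vector_derivative u x) (at x within S)"
    for x S
    unfolding u_def has_vector_derivative_complex_iff using n0
    by (auto intro!: derivative_eq_intros simp: algebra_simps)
  have "v = (\<lambda>x. complex_of_real (- \<alpha> * sin x) + \<i> * complex_of_real (- \<beta> * real n * sin (real n * x)))"
    unfolding v_def by (simp add: Complex_eq)
  then have "continuous_on {0..2*pi} v" by (simp add: continuous_intros)
  moreover have "u (x + 2 * pi) = u x" for x
  proof -
    have "real n * (x + 2 * pi) = real n * x + 2 * real n * pi" by (simp add: algebra_simps)
    then show ?thesis unfolding u_def by (simp add: cos_add)
  qed
  moreover have "u x = u 0 + integral {0..x} v" if "x \<in> {0..2*pi}" for x
    using fundamental_theorem_of_calculus[of 0 x u v] u' that by (simp add: integral_unique)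
  moreover have v_sq:
    "(cmod (v x))\<^sup>2 = \<alpha>\<^sup>2 * (sin x)\<^sup>2 + (\<beta>\<^sup>2 * (real n)\<^sup>2) * (sin (real n * x))\<^sup>2" for x
    unfolding v_def cmod_power2 by (simp add: power_mult_distrib)
  moreover have v_int:
    "((\<lambda>x. (cmod (v x))\<^sup>2) has_integral \<alpha>\<^sup>2 * pi + (\<beta>\<^sup>2 * (real n)\<^sup>2) * pi) {0..2*pi}"
    unfolding v_sq by (intro has_integral_add has_integral_mult_right sin1 has_integral_cos_sin_sq_nat_mult(2)[OF n])
  ultimately show "H1per u v"
    unfolding H1per_def using absolutely_integrable_continuous_real by blast
  show "integral {0..2*pi} (\<lambda>x. (cmod (v x))\<^sup>2) = pi * (\<alpha>\<^sup>2 + (real n)\<^sup>2 * \<beta>\<^sup>2)"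
    using integral_unique[OF v_int] by (simp add: algebra_simps)
  show "integral {0..2*pi} u = 0"
    using fundamental_theorem_of_calculus[of 0 "2 * pi" _ u, OF _ U'] sin_2npi[of n]
    by (simp add: integral_unique mult_ac)
  have "(cmod (u x))\<^sup>2 = \<alpha>\<^sup>2 * (cos x)\<^sup>2 + \<beta>\<^sup>2 * (cos (real n * x))\<^sup>2" for x
    unfolding u_def cmod_power2 by (simp add: power_mult_distrib)
  then have "((\<lambda>x. (cmod (u x))\<^sup>2) has_integral \<alpha>\<^sup>2 * pi + \<beta>\<^sup>2 * pi) {0..2*pi}"
    by (simp only:) (intro has_integral_add has_integral_mult_right cos1 has_integral_cos_sin_sq_nat_mult(1)[OF n])
  then show "integral {0..2*pi} (\<lambda>x. (cmod (u x))\<^sup>2) = pi * (\<alpha>\<^sup>2 + \<beta>\<^sup>2)"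
    by (simp add: integral_unique algebra_simps)
qed

lemma H1per_constraints_satisfiable:
  fixes D :: real
  assumes D: "1 \<le> D"
  shows "\<exists>u v. H1per u v \<and> integral {0..2*pi} u = 0
              \<and> integral {0..2*pi} (\<lambda>x. (cmod (u x))\<^sup>2) = 1
              \<and> integral {0..2*pi} (\<lambda>x. (cmod (v x))\<^sup>2) = D"
proof -
  define n :: nat where "n = nat \<lceil>D\<rceil> + 1"
  have n: "1 \<le> n" "2 \<le> real n" "D \<le> real n" unfolding n_def using D by linarith+
  define m where "m = (real n)\<^sup>2"
  have "real n \<le> m" using n by (simp add: m_def power2_eq_square)
  then have m: "D \<le> m" "1 < m" using n by linarith+
  define B where "B = (D - 1) / (pi * (m - 1))"
  define A where "A = 1 / pi - B"
  have B: "0 \<le> B" unfolding B_def using D m by simp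
  have "A = (m - D) / (pi * (m - 1))"
    unfolding A_def B_def using m by (simp add: field_simps)
  then have A: "0 \<le> A" using m by simp
  have u_norm: "pi * (A + B) = 1"
    unfolding A_def by (simp add: field_simps)
  have "pi * (A + m * B) = 1 + (m - 1) * (pi * B)"
    unfolding A_def by (simp add: field_simps)
  then have v_norm: "pi * (A + m * B) = D"
    unfolding B_def using m by simp
  show ?thesis
    using H1per_two_mode[OF n(1), of "sqrt A" "sqrt B"] A B u_norm v_norm unfolding m_def by auto
qed

lemma VV_le:
  assumes "1 \<le> D"
    and bound: "\<And>u v. H1per u v \<Longrightarrow> integral {0..2*pi} u = 0
                  \<Longrightarrow> integral {0..2*pi} (\<lambda>x. (cmod (u x))\<^sup>2) = 1
                  \<Longrightarrow> integral {0..2*pi} (\<lambda>x. (cmod (v x))\<^sup>2) = D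
                  \<Longrightarrow> (cmod (u 0))\<^sup>2 \<le> B"
  shows "VV D \<le> B"
  unfolding VV_def
  by (rule cSup_least) (use H1per_constraints_satisfiable[OF assms(1)] bound in auto)

theorem theorem2p4:
  fixes D :: real
  assumes "D \<ge> 1"
  shows "VV D < sqrt D - 1 / pi"
proof -
  define s where "s = sqrt D"
  have s: "1 \<le> s" "D = s\<^sup>2" unfolding s_def using assms by simp_all
  define a where "a = s * cosh (s * pi) / (4 * sinh (s * pi))"
  define b where "b = pi * s\<^sup>2 / (4 * (sinh (s * pi))\<^sup>2)"
  have "VV D \<le> (sqrt a + sqrt (a + b - 1 / (2 * pi)))\<^sup>2"
  proof (rule VV_le[OF assms])
    fix u v assume "H1per u v" "integral {0..2*pi} u = 0"
      "integral {0..2*pi} (\<lambda>x. (cmod (u x))\<^sup>2) = 1" "integral {0..2*pi} (\<lambda>x. (cmod (v x))\<^sup>2) = D"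
    then show "(cmod (u 0))\<^sup>2 \<le> (sqrt a + sqrt (a + b - 1 / (2 * pi)))\<^sup>2"
      using H1per_norm_value_at_0_le_sinh_bound[of s u v] s unfolding a_def b_def
      by (auto intro!: power_mono)
  qed
  also have "\<dots> < s - 1 / pi"
    unfolding a_def b_def by (rule sinh_weight_bound_sq_less[OF s(1)])
  finally show ?thesis unfolding s_def .
qed

end
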